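(* Let $0<p<1$, $q=1-p$, and let $\{X_i,i\geq 1\}$ be independent random variables with $P\{X_i=1\}=p$, $P\{X_i=0\}=q$. Let $M_N$ denote the length of the longest consecutive switches in $X_1,\ldots,X_N$ (defined in the context). Then $$\lim_{N\to\infty}\frac{M_N}{\log_{1/\sqrt{pq}} N}=1 \quad \text{almost surely.}$$
   Context: For $m,n\in\mathbb N$ let $S_n^{(m)}:=\sum_{i=m+1}^{n+m-1}\big[(1-X_{i-1})X_i+X_{i-1}(1-X_i)\big]$ be the number of switches (a 0 followed by a 1 or a 1 followed by a 0) among $X_m,\ldots,X_{m+n-1}$. For $m,N\in\mathbb N$ and $n=1,\ldots,N$ let $H_{m,n}^{(N)}:=\bigcup_{i=m}^{m+N-n+1}\{S_n^{(i)}=n-1\}$, and $M_N^{(m)}:=\max_{1\leq n\leq N}\{n-1 : H_{m,n}^{(N)}\neq\emptyset\}$ (the length of the longest consecutive switches in $X_m,\ldots,X_{m+N-1}$). Write $M_N:=M_N^{(1)}$. *)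

theory Defs
  imports "HOL-Probability.Probability"
begin

definition switches :: "(nat \<Rightarrow> 'a \<Rightarrow> real) \<Rightarrow> nat \<Rightarrow> nat \<Rightarrow> 'a \<Rightarrow> real" where
  "switches X n m \<omega> =
     (\<Sum>i\<in>{m+1..n+m-1}. (1 - X (i-1) \<omega>) * X i \<omega> + X (i-1) \<omega> * (1 - X i \<omega>))"

definition switch_event :: "(nat \<Rightarrow> 'a \<Rightarrow> real) \<Rightarrow> nat \<Rightarrow> nat \<Rightarrow> nat \<Rightarrow> 'a set" where
  "switch_event X m n N = (\<Union>i\<in>{m..m+N-n+1}. {\<omega>. switches X n i \<omega> = real n - 1})"

definition longest_switches :: "(nat \<Rightarrow> 'a \<Rightarrow> real) \<Rightarrow> nat \<Rightarrow> nat \<Rightarrow> 'a \<Rightarrow> nat" where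
  "longest_switches X N m \<omega> = Max {n - 1 | n. 1 \<le> n \<and> n \<le> N \<and> \<omega> \<in> switch_event X m n N}"

end

theory Submission
  imports Defs "HOL-Real_Asymp.Real_Asymp"
begin

(* On a path with values in {0, 1}, S_n^(i) = n - 1 says that X_i, ..., X_(i+n-1) alternate,
   i.e. spell one of the two words 1010... or 0101...; by independence this has probability
   between r^n and r^(n-1), where r = sqrt (p q).  Upper bound: an alternating run of length
   (1 + eps) log_(1/r) i starting at i has probability at most i^-(1 + eps), which is summable,
   so by Borel-Cantelli only finitely many occur; this bounds M_N by (1 + eps) log_(1/r) N + O(1).
   Lower bound: cut X_1, ..., X_N into N / (k + 1) disjoint blocks of length k + 1, where
   k = (1 - eps) log_(1/r) N.  The probability that no block alternates is at most
   (1 - r^(k+1))^(N/(k+1)), roughly exp (- r N^eps / log_(1/r) N), which is summable, so by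
   Borel-Cantelli almost surely some block eventually alternates. *)

lemma sum_eq_card_iff:
  fixes f :: "'b \<Rightarrow> real"
  assumes "finite A" "\<And>x. x \<in> A \<Longrightarrow> f x \<le> 1"
  shows "sum f A = real (card A) \<longleftrightarrow> (\<forall>x\<in>A. f x = 1)"
proof -
  have "sum f A = real (card A) \<longleftrightarrow> (\<Sum>x\<in>A. 1 - f x) = 0"
    by (simp add: sum_subtractf) arith
  also have "\<dots> \<longleftrightarrow> (\<forall>x\<in>A. 1 - f x = 0)"
    using assms by (intro sum_nonneg_eq_0_iff) auto
  finally show ?thesis by auto
qed

lemma one_minus_power_le_exp:
  fixes x :: real
  assumes "0 \<le> x" "x \<le> 1"
  shows "(1 - x) ^ n \<le> exp (- (x * real n))"
proof -
  have "(1 - x) ^ n \<le> exp (- x) ^ n"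
    using exp_ge_add_one_self[of "- x"] assms by (intro power_mono) auto
  also have "\<dots> = exp (- (x * real n))" by (simp add: exp_of_nat_mult[symmetric] mult.commute)
  finally show ?thesis .
qed

lemma powr_mult_log_inverse_base:
  fixes r x a :: real
  assumes "0 < r" "r < 1" "0 < x"
  shows "r powr (a * log (1 / r) x) = x powr (- a)"
proof -
  have "a * log (1 / r) x * ln r = - a * ln x"
    unfolding log_def using assms by (simp add: ln_div field_simps)
  then show ?thesis using assms by (simp add: powr_def)
qed

lemma tendsto_ratio_one:
  fixes f g :: "'b \<Rightarrow> real" and e :: "nat \<Rightarrow> real"
  assumes g: "filterlim g at_top F" and e: "e \<longlonglongrightarrow> 0"
    and close: "\<And>m. \<exists>C. eventually (\<lambda>x. \<bar>f x - g x\<bar> \<le> e m * g x + C) F"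
  shows "((\<lambda>x. f x / g x) \<longlongrightarrow> 1) F"
proof (rule tendstoI)
  fix d :: real assume "0 < d"
  obtain m where m: "\<bar>e m\<bar> < d / 2"
    using tendstoD[OF e, of "d / 2"] \<open>0 < d\<close> by (auto simp: eventually_sequentially)
  obtain C where C: "eventually (\<lambda>x. \<bar>f x - g x\<bar> \<le> e m * g x + C) F" using close by blast
  have "eventually (\<lambda>x. 2 * \<bar>C\<bar> / d < g x) F" using g by (simp add: filterlim_at_top_dense)
  with C show "eventually (\<lambda>x. dist (f x / g x) 1 < d) F"
  proof eventually_elim
    case (elim x)
    have "0 \<le> 2 * \<bar>C\<bar> / d" using \<open>0 < d\<close> by simp
    then have g0: "0 < g x" using elim(2) by linarith
    have "\<bar>C\<bar> < d / 2 * g x" using elim(2) \<open>0 < d\<close> by (simp add: field_simps)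
    moreover have "e m * g x \<le> d / 2 * g x" using m g0 by (intro mult_right_mono) auto
    ultimately have "\<bar>f x - g x\<bar> < d * g x" using elim(1) by linarith
    then show ?case using g0 by (simp add: dist_real_def abs_less_iff field_simps)
  qed
qed

lemma eventually_ln_le_powr_div_ln:
  fixes a c e :: real
  assumes "0 < a" "0 < c" "0 < e"
  shows "eventually (\<lambda>N::nat. 2 * ln (real N) \<le> a * real N powr e / (ln (real N) / c + 1) - 1) sequentially"
  using assms by real_asymp

(* The right-hand side is the exponent in exp (- r^(k+1) (N div (k+1))), which bounds the
   probability that none of N div (k+1) disjoint blocks of length k + 1 alternates. *)
lemma block_count_estimate:
  fixes r \<epsilon> :: real and N :: nat
  assumes r: "0 < r" "r < 1" and \<epsilon>: "0 \<le> \<epsilon>" "\<epsilon> \<le> 1" and "1 \<le> N"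
  defines "k \<equiv> nat \<lfloor>(1 - \<epsilon>) * log (1 / r) N\<rfloor>"
  shows "r * real N powr \<epsilon> / (log (1 / r) N + 1) - 1 \<le> r ^ (k + 1) * real (N div (k + 1))"
proof -
  define L where "L = log (1 / r) N"
  have N0: "0 < real N" using \<open>1 \<le> N\<close> by simp
  have L0: "0 \<le> L" unfolding L_def using r \<open>1 \<le> N\<close> by simp
  have "0 \<le> (1 - \<epsilon>) * L" using L0 \<epsilon> by simp
  then have k_le: "real k \<le> (1 - \<epsilon>) * L" unfolding k_def L_def by linarith
  have "(1 - \<epsilon>) * L \<le> L" using L0 \<epsilon> by (intro mult_left_le_one_le) auto
  then have k_le_L: "real k + 1 \<le> L + 1" using k_le by linarith
  have "real N powr (\<epsilon> - 1) = r powr ((1 - \<epsilon>) * L)"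
    unfolding L_def using powr_mult_log_inverse_base[OF r N0, of "1 - \<epsilon>"] by simp
  also have "\<dots> \<le> r powr real k" using r k_le by (intro powr_mono') auto
  also have "\<dots> = r ^ k" using r by (simp add: powr_realpow)
  finally have R_ge: "r * real N powr (\<epsilon> - 1) \<le> r ^ (k + 1)" using r by simp
  have T_ge: "real N / (real k + 1) - 1 \<le> real (N div (k + 1))"
  proof -
    have "N = N div (k + 1) * (k + 1) + N mod (k + 1)" by (rule div_mult_mod_eq[symmetric])
    moreover have "N mod (k + 1) < k + 1" by simp
    moreover have "(N div (k + 1) + 1) * (k + 1) = N div (k + 1) * (k + 1) + (k + 1)" by simp
    ultimately have "N < (N div (k + 1) + 1) * (k + 1)" by linarith
    then have "real N < real ((N div (k + 1) + 1) * (k + 1))" by (simp only: of_nat_less_iff)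
    also have "\<dots> = (real (N div (k + 1)) + 1) * (real k + 1)" by (simp add: algebra_simps)
    finally show ?thesis by (simp add: field_simps)
  qed
  have "r * real N powr \<epsilon> / (L + 1) = r * real N powr (\<epsilon> - 1) * (real N / (L + 1))"
    using N0 by (simp add: powr_diff)
  also have "\<dots> \<le> r ^ (k + 1) * (real N / (real k + 1))"
    using R_ge k_le_L N0 L0 r by (intro mult_mono divide_left_mono) auto
  also have "\<dots> = r ^ (k + 1) * (real N / (real k + 1) - 1) + r ^ (k + 1)"
    by (simp add: algebra_simps)
  also have "\<dots> \<le> r ^ (k + 1) * real (N div (k + 1)) + 1"
    using T_ge r by (intro add_mono mult_left_mono power_le_one) auto
  finally show ?thesis unfolding L_def by simp
qed

section \<open>Alternating runs\<close>

definition alternating :: "(nat \<Rightarrow> 'a \<Rightarrow> real) \<Rightarrow> nat \<Rightarrow> nat \<Rightarrow> 'a \<Rightarrow> bool" where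
  "alternating X i k \<omega> \<longleftrightarrow> (\<forall>l\<in>{i+1..i+k}. X (l-1) \<omega> \<noteq> X l \<omega>)"

lemma alternating_mono: "alternating X i k \<omega> \<Longrightarrow> k' \<le> k \<Longrightarrow> alternating X i k' \<omega>"
  unfolding alternating_def by auto

lemma alternating_shift: "alternating X i k \<omega> \<Longrightarrow> alternating X (i + d) (k - d) \<omega>"
  unfolding alternating_def by auto

lemma alternating_length_bound:
  assumes short: "\<And>j. j \<ge> j0 \<Longrightarrow> \<not> alternating X j (b j) \<omega>"
    and run: "alternating X i k \<omega>"
  shows "k < b (max i j0) + (j0 - i)"
proof (rule ccontr)
  assume "\<not> ?thesis"
  then have "b (max i j0) \<le> k - (j0 - i)" by linarith
  moreover have "i + (j0 - i) = max i j0" by simp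
  ultimately have "b (max i j0) \<le> k - (j0 - i) \<and> alternating X (max i j0) (k - (j0 - i)) \<omega>"
    using alternating_shift[OF run, of "j0 - i"] by metis
  then show False using short[of "max i j0"] by (meson alternating_mono max.cobounded2)
qed

lemma switches_eq_iff_alternating:
  assumes binary: "\<And>l. l \<ge> 1 \<Longrightarrow> X l \<omega> = 0 \<or> X l \<omega> = 1" and "n \<ge> 1" "i \<ge> 1"
  shows "switches X n i \<omega> = real n - 1 \<longleftrightarrow> alternating X i (n - 1) \<omega>"
proof -
  have I: "{i+1..n+i-1} = {i+1..i+(n-1)}" using \<open>n \<ge> 1\<close> by auto
  have "(1 - X (l-1) \<omega>) * X l \<omega> + X (l-1) \<omega> * (1 - X l \<omega>) = of_bool (X (l-1) \<omega> \<noteq> X l \<omega>)"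
    if "l \<in> {i+1..i+(n-1)}" for l
    using binary[of l] binary[of "l-1"] that \<open>i \<ge> 1\<close> by auto
  then have sum: "switches X n i \<omega> = (\<Sum>l\<in>{i+1..i+(n-1)}. of_bool (X (l-1) \<omega> \<noteq> X l \<omega>))"
    unfolding switches_def I by (intro sum.cong) auto
  have card: "real (card {i+1..i+(n-1)}) = real n - 1" using \<open>n \<ge> 1\<close> by simp
  have "switches X n i \<omega> = real n - 1 \<longleftrightarrow>
      (\<forall>l\<in>{i+1..i+(n-1)}. of_bool (X (l-1) \<omega> \<noteq> X l \<omega>) = (1::real))"
    unfolding sum card[symmetric] by (rule sum_eq_card_iff) auto
  then show ?thesis unfolding alternating_def by simp
qed

lemma alternating_imp_switch_event:
  assumes binary: "\<And>l. l \<ge> 1 \<Longrightarrow> X l \<omega> = 0 \<or> X l \<omega> = 1"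
    and "m \<le> i" "1 \<le> m" "i + k < m + N" and run: "alternating X i k \<omega>"
  shows "\<omega> \<in> switch_event X m (k + 1) N"
  using assms switches_eq_iff_alternating[of X \<omega> "k + 1" i]
  unfolding switch_event_def by (intro UN_I[of i]) auto

lemma switch_event_imp_alternating:
  assumes binary: "\<And>l. l \<ge> 1 \<Longrightarrow> X l \<omega> = 0 \<or> X l \<omega> = 1"
    and "1 \<le> m" "1 \<le> n" and "\<omega> \<in> switch_event X m n N"
  obtains i where "m \<le> i" "i \<le> m + N - n + 1" "alternating X i (n - 1) \<omega>"
  using assms switches_eq_iff_alternating[of X \<omega> n]
  unfolding switch_event_def by fastforce

lemma finite_switch_lengths: "finite {n - 1 | n. 1 \<le> n \<and> n \<le> N \<and> \<omega> \<in> switch_event X m n N}"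
  by (rule finite_subset[of _ "{..N}"]) auto

lemma longest_switches_ge:
  assumes binary: "\<And>l. l \<ge> 1 \<Longrightarrow> X l \<omega> = 0 \<or> X l \<omega> = 1"
    and "1 \<le> m" "m \<le> i" "i + k < m + N" and run: "alternating X i k \<omega>"
  shows "k \<le> longest_switches X N m \<omega>"
proof -
  have "\<omega> \<in> switch_event X m (k + 1) N"
    using alternating_imp_switch_event[of X \<omega> m i k N, OF binary] assms by blast
  then have "k \<in> {n - 1 | n. 1 \<le> n \<and> n \<le> N \<and> \<omega> \<in> switch_event X m n N}"
    using assms by (intro CollectI exI[of _ "k + 1"]) auto
  then show ?thesis unfolding longest_switches_def by (rule Max_ge[OF finite_switch_lengths])
qed

lemma longest_switches_attained:
  assumes binary: "\<And>l. l \<ge> 1 \<Longrightarrow> X l \<omega> = 0 \<or> X l \<omega> = 1" and "1 \<le> m" "1 \<le> N"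
  obtains i where "m \<le> i" "i < m + N" "alternating X i (longest_switches X N m \<omega>) \<omega>"
proof -
  let ?S = "{n - 1 | n. 1 \<le> n \<and> n \<le> N \<and> \<omega> \<in> switch_event X m n N}"
  have run0: "alternating X m 0 \<omega>" by (simp add: alternating_def)
  have "\<omega> \<in> switch_event X m 1 N"
    using alternating_imp_switch_event[of X \<omega> m m 0 N, OF binary] assms run0 by simp
  then have "0 \<in> ?S" using assms by force
  then have "Max ?S \<in> ?S" using finite_switch_lengths by (intro Max_in) auto
  then obtain n where n: "longest_switches X N m \<omega> = n - 1" "1 \<le> n" "n \<le> N" "\<omega> \<in> switch_event X m n N"
    unfolding longest_switches_def by blast
  obtain i where i: "m \<le> i" "i \<le> m + N - n + 1" "alternating X i (n - 1) \<omega>"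
    using switch_event_imp_alternating[of X \<omega> m n N, OF binary] assms n by metis
  show thesis
  proof (cases "n = 1")
    case True
    \<comment> \<open>the witness i may then be m + N, one past the window\<close>
    then show thesis using that[of m] n run0 assms by simp
  next
    case False
    then show thesis using that[of i] n i by simp
  qed
qed

lemma longest_switches_less_of_short_runs:
  assumes binary: "\<And>l. l \<ge> 1 \<Longrightarrow> X l \<omega> = 0 \<or> X l \<omega> = 1"
    and short: "\<And>i. i \<ge> i0 \<Longrightarrow> \<not> alternating X i (b i) \<omega>" and "mono b" and "1 \<le> N"
  shows "longest_switches X N 1 \<omega> < b N + b i0 + i0"
proof -
  obtain i where i: "1 \<le> i" "i < 1 + N" "alternating X i (longest_switches X N 1 \<omega>) \<omega>"
    using longest_switches_attained[of X \<omega> 1 N, OF binary order_refl \<open>1 \<le> N\<close>] by metis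
  have "longest_switches X N 1 \<omega> < b (max i i0) + (i0 - i)"
    by (rule alternating_length_bound[OF short i(3)])
  also have "\<dots> \<le> b i + b i0 + i0" by (cases "i \<le> i0") (simp_all add: max_def)
  also have "\<dots> \<le> b N + b i0 + i0" using \<open>mono b\<close> i by (simp add: monoD)
  finally show ?thesis .
qed

definition alternating_word :: "bool \<Rightarrow> nat \<Rightarrow> real" where
  "alternating_word b j = (if even j = b then 1 else 0)"

definition alternating_word_prob :: "real \<Rightarrow> real \<Rightarrow> bool \<Rightarrow> nat \<Rightarrow> real" where
  "alternating_word_prob p q b k = (\<Prod>j\<le>k. if even j = b then p else q)"

lemma alternating_word_prob_Suc_Suc:
  "alternating_word_prob p q b (Suc (Suc k)) = alternating_word_prob p q b k * (p * q)"
  unfolding alternating_word_prob_def by (simp add: atMost_Suc)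

lemma alternating_words_prob_Suc_Suc:
  "alternating_word_prob p q True (Suc (Suc k)) + alternating_word_prob p q False (Suc (Suc k)) =
    (alternating_word_prob p q True k + alternating_word_prob p q False k) * (p * q)"
  by (simp add: alternating_word_prob_Suc_Suc distrib_right)

lemma alternating_words_prob_even:
  "alternating_word_prob p q True (2 * m) + alternating_word_prob p q False (2 * m) = (p + q) * (p * q) ^ m"
proof (induction m)
  case (Suc m)
  then show ?case
    using alternating_words_prob_Suc_Suc[of p q "2 * m"] by simp
qed (simp add: alternating_word_prob_def)

lemma alternating_words_prob_odd:
  "alternating_word_prob p q True (2 * m + 1) + alternating_word_prob p q False (2 * m + 1) = 2 * (p * q) ^ (m + 1)"
proof (induction m)
  case (Suc m)
  then show ?case
    using alternating_words_prob_Suc_Suc[of p q "2 * m + 1"] by simp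
qed (simp add: alternating_word_prob_def)

lemma alternating_words_prob_bounds:
  fixes p q :: real
  assumes "0 \<le> p" "0 \<le> q" "p + q = 1"
  shows "sqrt (p * q) ^ (k + 1) \<le> alternating_word_prob p q True k + alternating_word_prob p q False k"
    and "alternating_word_prob p q True k + alternating_word_prob p q False k \<le> sqrt (p * q) ^ k"
proof -
  define r where "r = sqrt (p * q)"
  define s where "s = alternating_word_prob p q True k + alternating_word_prob p q False k"
  have r0: "0 \<le> r" and r2: "p * q = r ^ 2" unfolding r_def using assms by simp_all
  have "1 - 4 * r ^ 2 = (p + q) ^ 2 - 4 * (p * q)" using assms(3) r2 by simp
  also have "\<dots> = (p - q) ^ 2" by (simp add: power2_eq_square algebra_simps)
  finally have "4 * r ^ 2 \<le> 1" using zero_le_power2[of "p - q"] by linarith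
  then have "(2 * r) ^ 2 \<le> 1 ^ 2" by (simp add: power_mult_distrib)
  then have r_half: "2 * r \<le> 1" by (rule power2_le_imp_le) simp
  have "r ^ (k + 1) \<le> s \<and> s \<le> r ^ k"
  proof (cases "even k")
    case True
    then obtain m where k: "k = 2 * m" by (rule evenE)
    have "s = r ^ k"
      unfolding s_def k alternating_words_prob_even assms(3) r2 by (simp add: power_mult)
    moreover have "r ^ (k + 1) \<le> r ^ k" using r0 r_half by (intro power_decreasing) auto
    ultimately show ?thesis by simp
  next
    case False
    then obtain m where k: "k = 2 * m + 1" by (rule oddE)
    have "(r ^ 2) ^ (m + 1) = r ^ (k + 1)" unfolding k power_mult[symmetric] by simp
    then have "s = 2 * r ^ (k + 1)" unfolding s_def k alternating_words_prob_odd r2 by simp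
    moreover have "2 * r ^ (k + 1) \<le> r ^ k" using r0 r_half mult_right_mono[OF r_half, of "r ^ k"] by simp
    moreover have "r ^ (k + 1) \<le> 2 * r ^ (k + 1)" using r0 by simp
    ultimately show ?thesis by simp
  qed
  then show "sqrt (p * q) ^ (k + 1) \<le> alternating_word_prob p q True k + alternating_word_prob p q False k"
    and "alternating_word_prob p q True k + alternating_word_prob p q False k \<le> sqrt (p * q) ^ k"
    unfolding r_def s_def by auto
qed

lemma alternating_word_imp_alternating:
  assumes word: "\<And>j. j \<le> k \<Longrightarrow> X (i + j) \<omega> = alternating_word b j"
  shows "alternating X i k \<omega>"
  unfolding alternating_def
proof
  fix l assume "l \<in> {i+1..i+k}"
  then obtain j where "l = i + Suc j" "Suc j \<le> k" by (intro that[of "l - i - 1"]) auto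
  then show "X (l - 1) \<omega> \<noteq> X l \<omega>"
    using word[of j] word[of "Suc j"] by (auto simp: alternating_word_def)
qed

lemma alternating_imp_alternating_word:
  assumes binary: "\<And>l. l \<ge> 1 \<Longrightarrow> X l \<omega> = 0 \<or> X l \<omega> = 1" and "1 \<le> i"
    and run: "alternating X i k \<omega>"
  obtains b where "\<And>j. j \<le> k \<Longrightarrow> X (i + j) \<omega> = alternating_word b j"
proof
  fix j assume "j \<le> k"
  then show "X (i + j) \<omega> = alternating_word (X i \<omega> = 1) j"
  proof (induction j)
    case 0
    show ?case using binary[of i] \<open>1 \<le> i\<close> by (auto simp: alternating_word_def)
  next
    case (Suc j)
    have "i + Suc j \<in> {i+1..i+k}" using Suc.prems by simp
    then have "X (i + j) \<omega> \<noteq> X (i + Suc j) \<omega>" using run unfolding alternating_def by fastforce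
    then show ?case
      using Suc binary[of "i + Suc j"] by (auto simp: alternating_word_def)
  qed
qed

section \<open>Alternating runs in a Bernoulli sequence\<close>

locale bernoulli_sequence = prob_space M for M :: "'a measure" +
  fixes X :: "nat \<Rightarrow> 'a \<Rightarrow> real" and p q :: real
  assumes p_pos: "0 < p" and p_less_1: "p < 1" and q_def: "q = 1 - p"
    and X_measurable: "\<And>i. i \<ge> 1 \<Longrightarrow> X i \<in> borel_measurable M"
    and X_indep: "indep_vars (\<lambda>_. borel) X {1..}"
    and prob_X_1: "\<And>i. i \<ge> 1 \<Longrightarrow> prob {\<omega> \<in> space M. X i \<omega> = 1} = p"
    and prob_X_0: "\<And>i. i \<ge> 1 \<Longrightarrow> prob {\<omega> \<in> space M. X i \<omega> = 0} = q"
begin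

lemma p_q_distribution: "0 \<le> p" "0 \<le> q" "p + q = 1"
  using p_pos p_less_1 q_def by auto

lemma sqrt_pq_pos: "0 < sqrt (p * q)" and sqrt_pq_less_1: "sqrt (p * q) < 1"
proof -
  have "0 < q" "q < 1" using p_pos p_less_1 q_def by auto
  then have "0 < p * q" "p * q < 1" using p_pos p_less_1 by (auto intro: mult_strict_mono[of p 1 q 1, simplified])
  then show "0 < sqrt (p * q)" "sqrt (p * q) < 1" by auto
qed

lemma AE_binary: "AE \<omega> in M. \<forall>l\<ge>1. X l \<omega> = 0 \<or> X l \<omega> = 1"
proof -
  have "AE \<omega> in M. X l \<omega> = 0 \<or> X l \<omega> = 1" if "1 \<le> l" for l
  proof -
    have [measurable]: "X l \<in> borel_measurable M" using X_measurable that by blast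
    have "prob ({\<omega> \<in> space M. X l \<omega> = 0} \<union> {\<omega> \<in> space M. X l \<omega> = 1}) = q + p"
      using prob_X_0[OF that] prob_X_1[OF that] by (subst finite_measure_Union) auto
    moreover have "{\<omega> \<in> space M. X l \<omega> = 0} \<union> {\<omega> \<in> space M. X l \<omega> = 1} =
        {\<omega> \<in> space M. X l \<omega> = 0 \<or> X l \<omega> = 1}" by auto
    ultimately have "prob {\<omega> \<in> space M. X l \<omega> = 0 \<or> X l \<omega> = 1} = 1" using q_def by simp
    from AE_prob_1[OF this] show ?thesis by eventually_elim auto
  qed
  then show ?thesis by (subst AE_all_countable) auto
qed

lemma sets_X_eq: "1 \<le> i \<Longrightarrow> {\<omega> \<in> space M. X i \<omega> = c} \<in> events"
  using X_measurable by measurable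

lemma sets_X_neq: "1 \<le> i \<Longrightarrow> 1 \<le> j \<Longrightarrow> {\<omega> \<in> space M. X i \<omega> \<noteq> X j \<omega>} \<in> events"
  using X_measurable by measurable

lemma sets_alternating: "1 \<le> i \<Longrightarrow> {\<omega> \<in> space M. alternating X i k \<omega>} \<in> events"
  unfolding alternating_def by (intro sets.sets_Collect_finite_All sets_X_neq) auto

lemma sets_alternating_word:
  "1 \<le> i \<Longrightarrow> {\<omega> \<in> space M. \<forall>j\<le>k. X (i + j) \<omega> = alternating_word b j} \<in> events"
  using sets.sets_Collect_finite_All[of "{..k}"] sets_X_eq by auto

lemma prob_alternating_word:
  assumes "1 \<le> i"
  shows "prob {\<omega> \<in> space M. \<forall>j\<le>k. X (i + j) \<omega> = alternating_word b j} = alternating_word_prob p q b k"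
proof -
  define v where "v l = alternating_word b (l - i)" for l
  have "{\<omega> \<in> space M. \<forall>j\<le>k. X (i + j) \<omega> = alternating_word b j} =
      (\<Inter>l\<in>(+) i ` {..k}. X l -` {v l} \<inter> space M)"
    by (auto simp: v_def)
  also have "prob \<dots> = (\<Prod>l\<in>(+) i ` {..k}. prob (X l -` {v l} \<inter> space M))"
    using assms by (intro indep_varsD[OF X_indep]) auto
  also have "\<dots> = (\<Prod>j\<le>k. prob (X (i + j) -` {v (i + j)} \<inter> space M))"
    by (simp add: prod.reindex o_def)
  also have "\<dots> = alternating_word_prob p q b k"
    unfolding alternating_word_prob_def
  proof (rule prod.cong)
    fix j assume "j \<in> {..k}"
    have "X (i + j) -` {v (i + j)} \<inter> space M = {\<omega> \<in> space M. X (i + j) \<omega> = alternating_word b j}"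
      by (auto simp: v_def)
    moreover have "1 \<le> i + j" using assms by simp
    ultimately show "prob (X (i + j) -` {v (i + j)} \<inter> space M) = (if even j = b then p else q)"
      using prob_X_0[of "i + j"] prob_X_1[of "i + j"] unfolding alternating_word_def
      by (cases "even j = b") simp_all
  qed simp
  finally show ?thesis .
qed

lemma prob_alternating_le:
  assumes "1 \<le> i"
  shows "prob {\<omega> \<in> space M. alternating X i k \<omega>} \<le> sqrt (p * q) ^ k"
proof -
  let ?W = "\<lambda>b. {\<omega> \<in> space M. \<forall>j\<le>k. X (i + j) \<omega> = alternating_word b j}"
  have "prob {\<omega> \<in> space M. alternating X i k \<omega>} \<le> prob (?W True \<union> ?W False)"
  proof (rule finite_measure_mono_AE)
    show "AE \<omega> in M. \<omega> \<in> {\<omega> \<in> space M. alternating X i k \<omega>} \<longrightarrow> \<omega> \<in> ?W True \<union> ?W False"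
      using AE_binary
    proof eventually_elim
      case (elim \<omega>)
      show ?case
      proof
        assume "\<omega> \<in> {\<omega> \<in> space M. alternating X i k \<omega>}"
        then have "\<omega> \<in> space M" and run: "alternating X i k \<omega>" by auto
        from elim have binary: "\<And>l. l \<ge> 1 \<Longrightarrow> X l \<omega> = 0 \<or> X l \<omega> = 1" by blast
        obtain b where "\<And>j. j \<le> k \<Longrightarrow> X (i + j) \<omega> = alternating_word b j"
          using alternating_imp_alternating_word[of X \<omega> i k, OF binary assms run] by metis
        with \<open>\<omega> \<in> space M\<close> have "\<omega> \<in> ?W b" by simp
        then show "\<omega> \<in> ?W True \<union> ?W False" by (cases b) simp_all
      qed
    qed
    show "?W True \<union> ?W False \<in> events" by (intro sets.Un sets_alternating_word assms)
  qed
  also have "\<dots> \<le> prob (?W True) + prob (?W False)"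
    by (intro measure_Un_le sets_alternating_word assms)
  also have "\<dots> \<le> sqrt (p * q) ^ k"
    unfolding prob_alternating_word[OF assms] by (rule alternating_words_prob_bounds(2)[OF p_q_distribution])
  finally show ?thesis .
qed

lemma prob_alternating_ge:
  assumes "1 \<le> i"
  shows "sqrt (p * q) ^ (k + 1) \<le> prob {\<omega> \<in> space M. alternating X i k \<omega>}"
proof -
  let ?W = "\<lambda>b. {\<omega> \<in> space M. \<forall>j\<le>k. X (i + j) \<omega> = alternating_word b j}"
  have "sqrt (p * q) ^ (k + 1) \<le> prob (?W True) + prob (?W False)"
    unfolding prob_alternating_word[OF assms] by (rule alternating_words_prob_bounds(1)[OF p_q_distribution])
  also have "\<dots> = prob (?W True \<union> ?W False)"
  proof (rule finite_measure_Union[symmetric])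
    show "?W True \<inter> ?W False = {}"
    proof (rule equals0I)
      fix \<omega> assume "\<omega> \<in> ?W True \<inter> ?W False"
      then have "X i \<omega> = alternating_word True 0" "X i \<omega> = alternating_word False 0" by auto
      then show False by (simp add: alternating_word_def)
    qed
  qed (intro sets_alternating_word assms)+
  also have "\<dots> \<le> prob {\<omega> \<in> space M. alternating X i k \<omega>}"
    by (intro finite_measure_mono sets_alternating assms) (blast intro: alternating_word_imp_alternating)
  finally show ?thesis .
qed

lemma prob_no_alternating_block:
  "prob {\<omega> \<in> space M. \<forall>t<T. \<not> alternating X (1 + t * (k + 1)) k \<omega>} \<le> (1 - sqrt (p * q) ^ (k + 1)) ^ T"
proof (cases "T = 0")
  case False
  define s where "s t = 1 + t * (k + 1)" for t
  define K where "K t = {s t..s t + k}" for t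
  define Y where "Y t \<omega> = restrict (\<lambda>i. X i \<omega>) (K t)" for t \<omega>
  define A where "A t = {f \<in> space (PiM (K t) (\<lambda>_. borel)). \<not> alternating (\<lambda>i f. f i) (s t) k f}" for t
  have disjoint: "disjoint_family_on K {..<T}"
  proof -
    have "K t \<inter> K u = {}" if "t < u" for t u
    proof -
      have "(t + 1) * (k + 1) \<le> u * (k + 1)" using that by (intro mult_le_mono1) simp
      then show ?thesis by (auto simp: K_def s_def)
    qed
    then show ?thesis
      unfolding disjoint_family_on_def by (metis Int_commute linorder_neqE_nat)
  qed
  have Y_indep: "indep_vars (\<lambda>t. PiM (K t) (\<lambda>_. borel)) Y {..<T}"
    unfolding Y_def by (rule indep_vars_restrict[OF X_indep _ disjoint]) (auto simp: K_def s_def)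
  have A_sets: "A t \<in> sets (PiM (K t) (\<lambda>_. borel))" for t
    unfolding A_def alternating_def
    by measurable (auto simp: K_def pred_def intro!: borel_measurable_eq measurable_component_singleton)
  have preimage: "Y t -` A t \<inter> space M = space M - {\<omega> \<in> space M. alternating X (s t) k \<omega>}" for t
  proof -
    have "alternating (\<lambda>i f. f i) (s t) k (Y t \<omega>) \<longleftrightarrow> alternating X (s t) k \<omega>" for \<omega>
      unfolding alternating_def Y_def K_def by (intro ball_cong) auto
    then show ?thesis unfolding A_def Y_def by (auto simp: space_PiM)
  qed
  have "{\<omega> \<in> space M. \<forall>t<T. \<not> alternating X (1 + t * (k + 1)) k \<omega>} = (\<Inter>t\<in>{..<T}. Y t -` A t \<inter> space M)"
    unfolding preimage s_def using False by auto
  also have "prob \<dots> = (\<Prod>t<T. prob (Y t -` A t \<inter> space M))"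
    using False A_sets by (intro indep_varsD[OF Y_indep]) auto
  also have "\<dots> \<le> (\<Prod>t<T. 1 - sqrt (p * q) ^ (k + 1))"
  proof (rule prod_mono)
    fix t assume "t \<in> {..<T}"
    have "1 \<le> s t" by (simp add: s_def)
    then have "prob (Y t -` A t \<inter> space M) = 1 - prob {\<omega> \<in> space M. alternating X (s t) k \<omega>}"
      unfolding preimage by (intro prob_compl sets_alternating)
    then show "0 \<le> prob (Y t -` A t \<inter> space M) \<and> prob (Y t -` A t \<inter> space M) \<le> 1 - sqrt (p * q) ^ (k + 1)"
      using prob_alternating_ge[OF \<open>1 \<le> s t\<close>, of k] by simp
  qed
  finally show ?thesis by simp
qed simp

lemma AE_longest_switches_upper:
  assumes "0 < \<epsilon>"
  shows "AE \<omega> in M. \<exists>C. \<forall>N\<ge>1.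
    real (longest_switches X N 1 \<omega>) \<le> (1 + \<epsilon>) * log (1 / sqrt (p * q)) N + C"
proof -
  define r where "r = sqrt (p * q)"
  have r: "0 < r" "r < 1" unfolding r_def using sqrt_pq_pos sqrt_pq_less_1 by auto
  define L where "L i = log (1 / r) (real i)" for i :: nat
  define b where "b i = nat \<lceil>(1 + \<epsilon>) * L i\<rceil>" for i
  have L_0: "L 0 = 0" by (simp add: L_def log_def)
  have L_nonneg: "0 \<le> L i" for i
    using r L_0 by (cases "i = 0") (simp_all add: L_def)
  have "mono L"
  proof (rule monoI)
    fix i j :: nat assume "i \<le> j"
    then show "L i \<le> L j" using r L_0 L_nonneg[of j] by (cases "i = 0") (simp_all add: L_def)
  qed
  then have "mono b" unfolding b_def using \<open>0 < \<epsilon>\<close> by (auto intro!: monoI nat_mono ceiling_mono dest: monoD)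
  define B where "B i = {\<omega> \<in> space M. 1 \<le> i \<and> alternating X i (b i) \<omega>}" for i
  have B_sets: "B i \<in> events" for i
    using sets_alternating[of i "b i"] by (cases "1 \<le> i") (simp_all add: B_def)
  have prob_B: "prob (B i) \<le> real i powr - (1 + \<epsilon>)" for i
  proof (cases "1 \<le> i")
    case True
    then have "prob (B i) \<le> r ^ b i"
      unfolding B_def r_def using prob_alternating_le[OF True, of "b i"] by simp
    also have "\<dots> = r powr real (b i)" using r by (simp add: powr_realpow)
    also have "\<dots> \<le> r powr ((1 + \<epsilon>) * L i)"
      using r by (intro powr_mono') (auto simp: b_def real_nat_ceiling_ge)
    also have "\<dots> = real i powr - (1 + \<epsilon>)"
      unfolding L_def using powr_mult_log_inverse_base[OF r, of "real i" "1 + \<epsilon>"] True by simp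
    finally show ?thesis .
  qed (simp add: B_def)
  have "summable (\<lambda>i. real i powr - (1 + \<epsilon>))"
    using \<open>0 < \<epsilon>\<close> by (subst summable_real_powr_iff) simp
  then have "summable (\<lambda>i. prob (B i))"
    by (rule summable_comparison_test') (use prob_B in simp)
  then have "AE \<omega> in M. eventually (\<lambda>i. \<omega> \<in> space M - B i) sequentially"
    by (intro borel_cantelli_AE1 B_sets) (simp_all add: less_top[symmetric])
  with AE_binary show ?thesis
  proof eventually_elim
    case (elim \<omega>)
    then have binary: "\<And>l. l \<ge> 1 \<Longrightarrow> X l \<omega> = 0 \<or> X l \<omega> = 1" by blast
    from elim obtain i1 where i1: "\<And>i. i \<ge> i1 \<Longrightarrow> \<omega> \<in> space M - B i"
      unfolding eventually_sequentially by blast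
    define i0 where "i0 = max i1 1"
    have short: "\<not> alternating X i (b i) \<omega>" if "i \<ge> i0" for i
    proof -
      have "i \<ge> i1" "1 \<le> i" using that by (simp_all add: i0_def)
      with i1 show ?thesis by (simp add: B_def)
    qed
    have "real (longest_switches X N 1 \<omega>) \<le> (1 + \<epsilon>) * L N + (b i0 + i0 + 1)" if "1 \<le> N" for N
    proof -
      have "longest_switches X N 1 \<omega> < b N + b i0 + i0"
        by (rule longest_switches_less_of_short_runs[of X \<omega>, OF binary short \<open>mono b\<close> that])
      moreover have "real (b N) = of_int \<lceil>(1 + \<epsilon>) * L N\<rceil>"
        unfolding b_def using L_nonneg[of N] \<open>0 < \<epsilon>\<close> by simp
      ultimately show ?thesis using ceiling_correct[of "(1 + \<epsilon>) * L N"] by linarith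
    qed
    then show ?case unfolding L_def r_def by blast
  qed
qed

lemma sets_no_alternating_block:
  "{\<omega> \<in> space M. \<forall>t<T. \<not> alternating X (1 + t * (k + 1)) k \<omega>} \<in> events"
proof -
  have "{\<omega> \<in> space M. \<forall>t<T. \<not> alternating X (1 + t * (k + 1)) k \<omega>} =
      {\<omega> \<in> space M. \<forall>t\<in>{..<T}. \<not> alternating X (1 + t * (k + 1)) k \<omega>}" by auto
  also have "\<dots> \<in> events"
    by (intro sets.sets_Collect_finite_All sets.sets_Collect_neg sets_alternating) auto
  finally show ?thesis .
qed

lemma eventually_prob_no_alternating_block_le:
  assumes "0 < \<epsilon>" "\<epsilon> < 1"
  defines "k \<equiv> \<lambda>N. nat \<lfloor>(1 - \<epsilon>) * log (1 / sqrt (p * q)) N\<rfloor>"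
  shows "eventually (\<lambda>N. prob {\<omega> \<in> space M. \<forall>t < N div (k N + 1).
    \<not> alternating X (1 + t * (k N + 1)) (k N) \<omega>} \<le> real N powr - 2) sequentially"
proof -
  define r where "r = sqrt (p * q)"
  have r: "0 < r" "r < 1" unfolding r_def using sqrt_pq_pos sqrt_pq_less_1 by auto
  have "eventually (\<lambda>N. 2 * ln (real N) \<le> r * real N powr \<epsilon> / (log (1 / r) N + 1) - 1) sequentially"
    using eventually_ln_le_powr_div_ln[of r "ln (1 / r)" \<epsilon>] r assms by (simp add: log_def)
  with eventually_ge_at_top[of 1] show ?thesis
  proof eventually_elim
    case (elim N)
    let ?T = "N div (k N + 1)"
    have "prob {\<omega> \<in> space M. \<forall>t < ?T. \<not> alternating X (1 + t * (k N + 1)) (k N) \<omega>}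
        \<le> (1 - r ^ (k N + 1)) ^ ?T"
      unfolding r_def by (rule prob_no_alternating_block)
    also have "\<dots> \<le> exp (- (r ^ (k N + 1) * real ?T))"
      using r power_le_one[of r "k N + 1"] by (intro one_minus_power_le_exp) simp_all
    also have "\<dots> \<le> exp (- (2 * ln (real N)))"
      using block_count_estimate[OF r _ _ elim(1), of \<epsilon>] elim(2) assms
      by (simp add: k_def r_def)
    also have "\<dots> = real N powr - 2" using elim(1) by (simp add: powr_def)
    finally show ?case .
  qed
qed

lemma AE_longest_switches_lower:
  assumes "0 < \<epsilon>" "\<epsilon> < 1"
  shows "AE \<omega> in M. eventually (\<lambda>N.
    (1 - \<epsilon>) * log (1 / sqrt (p * q)) N - 1 \<le> real (longest_switches X N 1 \<omega>)) sequentially"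
proof -
  define L where "L N = log (1 / sqrt (p * q)) (real N)" for N :: nat
  define k where "k N = nat \<lfloor>(1 - \<epsilon>) * L N\<rfloor>" for N
  define E where "E N = {\<omega> \<in> space M. \<forall>t < N div (k N + 1). \<not> alternating X (1 + t * (k N + 1)) (k N) \<omega>}"
    for N
  have "eventually (\<lambda>N. norm (prob (E N)) \<le> real N powr - 2) sequentially"
    using eventually_prob_no_alternating_block_le[OF assms] unfolding E_def k_def L_def by simp
  moreover have "summable (\<lambda>N. real N powr - 2)" by (subst summable_real_powr_iff) simp
  ultimately have "summable (\<lambda>N. prob (E N))" by (rule summable_comparison_test_ev)
  then have "AE \<omega> in M. eventually (\<lambda>N. \<omega> \<in> space M - E N) sequentially"
    unfolding E_def by (intro borel_cantelli_AE1 sets_no_alternating_block) (simp_all add: less_top[symmetric])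
  with AE_binary show ?thesis
  proof eventually_elim
    case (elim \<omega>)
    then have binary: "\<And>l. l \<ge> 1 \<Longrightarrow> X l \<omega> = 0 \<or> X l \<omega> = 1" by blast
    from elim(2) eventually_ge_at_top[of 1]
    show ?case
    proof eventually_elim
      case (elim N)
      then obtain t where t: "t < N div (k N + 1)" "alternating X (1 + t * (k N + 1)) (k N) \<omega>"
        unfolding E_def by auto
      have "(t + 1) * (k N + 1) \<le> N div (k N + 1) * (k N + 1)" using t(1) by (intro mult_le_mono1) simp
      also have "\<dots> \<le> N" by (rule div_times_less_eq_dividend)
      finally have "1 + t * (k N + 1) + k N < 1 + N" by simp
      then have "k N \<le> longest_switches X N 1 \<omega>"
        using longest_switches_ge[of X \<omega>, OF binary _ _ _ t(2)] by simp
      moreover have "0 \<le> (1 - \<epsilon>) * L N"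
        using sqrt_pq_pos sqrt_pq_less_1 elim(2) assms by (simp add: L_def)
      ultimately show ?case unfolding k_def L_def by linarith
    qed
  qed
qed

lemma AE_longest_switches_close:
  assumes "0 < \<epsilon>" "\<epsilon> < 1"
  shows "AE \<omega> in M. \<exists>C. eventually (\<lambda>N. \<bar>real (longest_switches X N 1 \<omega>) - log (1 / sqrt (p * q)) N\<bar>
    \<le> \<epsilon> * log (1 / sqrt (p * q)) N + C) sequentially"
  using AE_longest_switches_upper[OF assms(1)] AE_longest_switches_lower[OF assms]
proof eventually_elim
  case (elim \<omega>)
  obtain C where C: "\<And>N. N \<ge> 1 \<Longrightarrow>
      real (longest_switches X N 1 \<omega>) \<le> (1 + \<epsilon>) * log (1 / sqrt (p * q)) N + C"
    using elim(1) by blast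
  have "eventually (\<lambda>N. \<bar>real (longest_switches X N 1 \<omega>) - log (1 / sqrt (p * q)) N\<bar>
      \<le> \<epsilon> * log (1 / sqrt (p * q)) N + max C 1) sequentially"
    using elim(2) eventually_ge_at_top[of 1]
  proof eventually_elim
    case (elim N)
    then show ?case
      using C[OF elim(2)] max.cobounded1[of C 1] max.cobounded2[of 1 C]
      by (intro abs_leI) (simp_all add: algebra_simps)
  qed
  then show ?case by blast
qed

end

theorem theorem2p1:
  fixes M :: "'a measure" and X :: "nat \<Rightarrow> 'a \<Rightarrow> real" and p q :: real
  assumes "prob_space M"
    and "0 < p" and "p < 1" and "q = 1 - p"
    and "\<And>i. i \<ge> 1 \<Longrightarrow> X i \<in> borel_measurable M"
    and "prob_space.indep_vars M (\<lambda>_. borel) X {1..}"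
    and "\<And>i. i \<ge> 1 \<Longrightarrow> measure M {\<omega> \<in> space M. X i \<omega> = 1} = p"
    and "\<And>i. i \<ge> 1 \<Longrightarrow> measure M {\<omega> \<in> space M. X i \<omega> = 0} = q"
  shows "AE \<omega> in M. (\<lambda>N. real (longest_switches X N 1 \<omega>) / log (1 / sqrt (p * q)) (real N))
            \<longlonglongrightarrow> 1"
proof -
  interpret bernoulli_sequence M X p q
    using assms by (simp add: bernoulli_sequence_def bernoulli_sequence_axioms_def)
  define L where "L N = log (1 / sqrt (p * q)) (real N)" for N :: nat
  define e where "e m = 1 / (real m + 2)" for m :: nat
  have L_top: "filterlim L at_top sequentially"
    using sqrt_pq_pos sqrt_pq_less_1 unfolding L_def log_def by real_asymp
  have e_lim: "e \<longlonglongrightarrow> 0" unfolding e_def by real_asymp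
  have "AE \<omega> in M. \<forall>m. \<exists>C. eventually (\<lambda>N.
      \<bar>real (longest_switches X N 1 \<omega>) - L N\<bar> \<le> e m * L N + C) sequentially"
    unfolding AE_all_countable L_def e_def by (intro allI AE_longest_switches_close) auto
  then show ?thesis
  proof eventually_elim
    case (elim \<omega>)
    show ?case
      unfolding L_def[symmetric] by (rule tendsto_ratio_one[OF L_top e_lim]) (use elim in blast)
  qed
qed

end
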